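(* Let $E$ be a real Banach space and $\mathcal{C}\subset E$ a regular Birkhoff cone with $\ell\in E'$, $\|\ell\|=1$, and $K<\infty$ such that $\frac1K\|u\|\le\langle\ell,u\rangle\le\|u\|$ for $u\in\mathcal{C}$, and let $\rho>0$ with $\mathcal{C}(\rho)=\{x\in\mathcal{C}:B(x,\rho\|x\|)\subset\mathcal{C}\}$. Let $L\in L(E)$ with $L(\mathcal{C})\subset\mathcal{C}$. Then for every $x\in\mathcal{C}(\rho)\setminus\{0\}$, \[\frac\rho K\|L\|\,\|x\|\le\langle\ell,Lx\rangle\le\|L\|\,\|x\|\quad\text{and}\quad\frac\rho K\|L\|\le\frac{\langle\ell,Lx\rangle}{\langle\ell,x\rangle}\le K\|L\|.\]
   Context: A Birkhoff cone is a closed convex set $\mathcal{C}\subset E$ with $\mathbb{R}_+\mathcal{C}=\mathcal{C}$ and $\mathcal{C}\cap(-\mathcal{C})=\{0\}$; regular means it has non-empty interior and the stated outer regularity functional exists. *)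

theory Defs
  imports "HOL-Analysis.Analysis"
begin

definition birkhoff_cone :: "'a::real_normed_vector set \<Rightarrow> bool" where
  "birkhoff_cone C \<longleftrightarrow> closed C \<and> convex C \<and> C \<noteq> {} \<and>
     (\<forall>t::real. t \<ge> 0 \<longrightarrow> (\<forall>x\<in>C. t *\<^sub>R x \<in> C)) \<and>
     C \<inter> uminus ` C = {0}"

definition regular_birkhoff_cone ::
  "'a::real_normed_vector set \<Rightarrow> ('a \<Rightarrow> real) \<Rightarrow> real \<Rightarrow> bool" where
  "regular_birkhoff_cone C l K \<longleftrightarrow> birkhoff_cone C \<and> interior C \<noteq> {} \<and>
     bounded_linear l \<and> onorm l = 1 \<and> 0 < K \<and>
     (\<forall>u\<in>C. norm u / K \<le> l u \<and> l u \<le> norm u)"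

definition cone_rho :: "'a::real_normed_vector set \<Rightarrow> real \<Rightarrow> 'a set" where
  "cone_rho C \<rho> = {x\<in>C. ball x (\<rho> * norm x) \<subseteq> C}"

end

theory Submission
  imports Defs
begin

text \<open>If \<open>B(x, \<rho>\<parallel>x\<parallel>) \<subseteq> \<C>\<close>, then \<open>x \<plusminus> w \<in> \<C>\<close> for every \<open>\<parallel>w\<parallel> < \<rho>\<parallel>x\<parallel>\<close>, and since
  \<open>2 L w = L(x + w) - L(x - w)\<close> with both terms in \<open>\<C>\<close>, where \<open>\<parallel>\<cdot>\<parallel> \<le> K \<langle>\<ell>, \<cdot>\<rangle>\<close>, we get
  \<open>\<parallel>L w\<parallel> \<le> K \<langle>\<ell>, L x\<rangle>\<close>. Rescaling \<open>w\<close> bounds the operator norm: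
  \<open>\<parallel>L\<parallel> \<le> K \<langle>\<ell>, L x\<rangle> / (\<rho>\<parallel>x\<parallel>)\<close>. All other inequalities follow from the comparison
  \<open>\<parallel>u\<parallel>/K \<le> \<langle>\<ell>, u\<rangle> \<le> \<parallel>u\<parallel>\<close> on the cone.\<close>

lemma regular_birkhoff_cone_functional_bounds:
  assumes "regular_birkhoff_cone C l K" and "u \<in> C"
  shows "norm u / K \<le> l u" and "l u \<le> norm u"
  using assms unfolding regular_birkhoff_cone_def by auto

lemma onorm_le_of_norm_bounded_on_ball:
  fixes f :: "'a::real_normed_vector \<Rightarrow> 'b::real_normed_vector"
  assumes f: "bounded_linear f" and r: "0 < r"
    and bound: "\<And>w. norm w < r \<Longrightarrow> norm (f w) \<le> M"
  shows "onorm f \<le> M / r"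
proof (rule onorm_bound)
  interpret f: bounded_linear f by (fact f)
  show "0 \<le> M / r"
    using bound[of 0] r by simp
  show "norm (f y) \<le> M / r * norm y" for y
  proof (cases "y = 0")
    case False
    then have ny: "norm y > 0" by simp
    have "(r / norm y) * norm (f y) \<le> M"
    proof (rule field_le_mult_one_interval)
      fix s :: real
      assume s: "0 < s" "s < 1"
      define w where "w = (s * (r / norm y)) *\<^sub>R y"
      have "norm w = s * r"
        using ny s r by (simp add: w_def)
      also have "\<dots> < r"
        using s r by simp
      finally have "norm (f w) \<le> M" by (rule bound)
      moreover have "norm (f w) = s * ((r / norm y) * norm (f y))"
        using ny s r by (simp add: w_def f.scaleR)
      ultimately show "s * ((r / norm y) * norm (f y)) \<le> M" by simp
    qed
    then show ?thesis
      using ny r by (simp add: field_simps)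
  qed simp
qed

lemma regular_birkhoff_cone_norm_image_le:
  assumes cone: "regular_birkhoff_cone C l K"
    and L: "linear L" and LC: "L ` C \<subseteq> C"
    and ball: "ball x r \<subseteq> C" and w: "norm w < r"
  shows "norm (L w) \<le> K * l (L x)"
proof -
  interpret L: linear L by (fact L)
  have K: "0 < K" and "linear l"
    using cone unfolding regular_birkhoff_cone_def by (auto dest: bounded_linear.linear)
  then interpret l: linear l by simp
  have "x + w \<in> C" "x - w \<in> C"
    using ball w by (auto simp: dist_norm)
  then have in_C: "L (x + w) \<in> C" "L (x - w) \<in> C"
    using LC by auto
  have "2 * norm (L w) = norm (L (x + w) - L (x - w))"
    by (simp add: L.add L.diff flip: scaleR_2)
  also have "\<dots> \<le> norm (L (x + w)) + norm (L (x - w))"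
    by (rule norm_triangle_ineq4)
  also have "\<dots> \<le> K * l (L (x + w)) + K * l (L (x - w))"
    using regular_birkhoff_cone_functional_bounds(1)[OF cone in_C(1)]
      regular_birkhoff_cone_functional_bounds(1)[OF cone in_C(2)] K
    by (simp add: field_simps)
  also have "\<dots> = 2 * (K * l (L x))"
    by (simp add: L.add L.diff l.add l.diff algebra_simps)
  finally show ?thesis by simp
qed

lemma regular_birkhoff_cone_quotient_bounds:
  assumes cone: "regular_birkhoff_cone C l K" and x: "x \<in> C" "0 < norm x"
    and a: "0 \<le> a" "a * norm x \<le> y" and b: "0 \<le> b" "y \<le> b * norm x"
  shows "a \<le> y / l x \<and> y / l x \<le> K * b"
proof -
  have K: "0 < K"
    using cone unfolding regular_birkhoff_cone_def by simp
  have lx: "norm x / K \<le> l x" "l x \<le> norm x"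
    using regular_birkhoff_cone_functional_bounds[OF cone x(1)] by auto
  moreover have "0 < norm x / K"
    using K x(2) by simp
  ultimately have lx_pos: "0 < l x"
    by linarith
  have "a * l x \<le> a * norm x"
    using lx(2) a(1) by (rule mult_left_mono)
  moreover have "b * norm x \<le> b * (K * l x)"
    using lx(1) b(1) K by (intro mult_left_mono) (auto simp: field_simps)
  ultimately show ?thesis
    using a(2) b(2) lx_pos by (simp add: pos_le_divide_eq pos_divide_le_eq algebra_simps)
qed

theorem lemmaA9:
  fixes C :: "'a::banach set" and l :: "'a \<Rightarrow> real" and K \<rho> :: real
    and L :: "'a \<Rightarrow> 'a" and x :: 'a
  assumes "regular_birkhoff_cone C l K"
    and "\<rho> > 0"
    and "bounded_linear L" and "L ` C \<subseteq> C"
    and "x \<in> cone_rho C \<rho> - {0}"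
  shows "\<rho> / K * onorm L * norm x \<le> l (L x) \<and> l (L x) \<le> onorm L * norm x \<and>
         \<rho> / K * onorm L \<le> l (L x) / l x \<and> l (L x) / l x \<le> K * onorm L"
proof -
  have K: "0 < K"
    using assms(1) unfolding regular_birkhoff_cone_def by simp
  have x: "x \<in> C" "ball x (\<rho> * norm x) \<subseteq> C" "0 < norm x"
    using assms(5) unfolding cone_rho_def by auto
  have "onorm L \<le> K * l (L x) / (\<rho> * norm x)"
    using assms(2-4) x
    by (intro onorm_le_of_norm_bounded_on_ball regular_birkhoff_cone_norm_image_le[OF assms(1)])
       (auto dest: bounded_linear.linear)
  then have lower: "\<rho> / K * onorm L * norm x \<le> l (L x)"
    using K assms(2) x(3) by (simp add: field_simps)
  have upper: "l (L x) \<le> onorm L * norm x"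
    using regular_birkhoff_cone_functional_bounds(2)[OF assms(1), of "L x"] onorm[OF assms(3), of x] assms(4) x(1) by auto
  have "0 \<le> \<rho> / K * onorm L" "0 \<le> onorm L"
    using K assms(2) onorm_pos_le[OF assms(3)] by simp_all
  with lower upper show ?thesis
    using regular_birkhoff_cone_quotient_bounds[OF assms(1) x(1) x(3)] by blast
qed

end
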